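(* Let $L$ be a Latin array of order $n$. If $L$ has at least $(229n^2+27n)/256$ distinct symbols, then $L$ has a transversal.
   Context: An array of order $n$ is an $n\times n$ array with a symbol in each cell; an entry is a triple $(i,j,A_{ij})$. An array is Latin if no symbol appears more than once in any row or column. A transversal of an $n\times n$ array is a set of $n$ entries, no two of which agree in row, column, or symbol. *)

theory Defs
  imports Complex_Main
begin

text \<open>An array of order n: a function A :: nat => nat => 'a, where only the cells
(i,j) with i < n and j < n are relevant. An entry is a triple (i, j, A i j).\<close>

definition entries :: "nat \<Rightarrow> (nat \<Rightarrow> nat \<Rightarrow> 'a) \<Rightarrow> (nat \<times> nat \<times> 'a) set" where
  "entries n A = {(i, j, A i j) | i j. i < n \<and> j < n}"

definition symbols :: "nat \<Rightarrow> (nat \<Rightarrow> nat \<Rightarrow> 'a) \<Rightarrow> 'a set" where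
  "symbols n A = {A i j | i j. i < n \<and> j < n}"

definition latin :: "nat \<Rightarrow> (nat \<Rightarrow> nat \<Rightarrow> 'a) \<Rightarrow> bool" where
  "latin n A \<longleftrightarrow>
     (\<forall>i<n. \<forall>j<n. \<forall>k<n. j \<noteq> k \<longrightarrow> A i j \<noteq> A i k) \<and>
     (\<forall>j<n. \<forall>i<n. \<forall>k<n. i \<noteq> k \<longrightarrow> A i j \<noteq> A k j)"

definition is_transversal :: "nat \<Rightarrow> (nat \<Rightarrow> nat \<Rightarrow> 'a) \<Rightarrow> (nat \<times> nat \<times> 'a) set \<Rightarrow> bool" where
  "is_transversal n A T \<longleftrightarrow>
     T \<subseteq> entries n A \<and> card T = n \<and>
     (\<forall>e\<in>T. \<forall>f\<in>T. e \<noteq> f \<longrightarrow>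
        fst e \<noteq> fst f \<and> fst (snd e) \<noteq> fst (snd f) \<and> snd (snd e) \<noteq> snd (snd f))"

end

theory Submission
  imports Defs
begin

(*
  Call a cell unique if its symbol occurs in no other cell, and let e = n^2 - #symbols be the
  number of missing symbols; at most 2e cells are not unique.  With d = n div 8, a row or column
  with fewer than d unique cells has at least n + 1 - d non-unique cells, so there are at most
  (n + 1)/2 such poor lines, and greedily adding cells in the Latin array yields a partial
  transversal P through all of them.  Extend P to a set K containing exactly one cell of every
  symbol: K contains all unique cells and misses exactly e cells, and a transversal is a perfect
  matching of rows to columns inside K.  If Hall's condition failed for a set X of rows, X and the
  set Y of columns it does not reach span a rectangle of missed cells with |X| + |Y| > n, while the
  lines outside P, having at least d unique cells, force d < |X| <= n - d; then |X| |Y| > e,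
  contradicting the bound on the number of symbols.
*)

lemma distinct_representatives_glue:
  assumes "inj_on f J" "\<forall>i\<in>J. f i \<in> S i \<inter> U"
    and "inj_on g (I - J)" "\<forall>i\<in>I - J. g i \<in> S i - U"
  shows "\<exists>h. inj_on h I \<and> (\<forall>i\<in>I. h i \<in> S i)"
proof (intro exI conjI)
  let ?h = "\<lambda>i. if i \<in> J then f i else g i"
  have side: "?h i \<in> U \<longleftrightarrow> i \<in> J" if "i \<in> I" for i
    using assms that by auto
  show "inj_on ?h I"
  proof (rule inj_onI)
    fix i j assume ij: "i \<in> I" "j \<in> I" "?h i = ?h j"
    then have "i \<in> J \<longleftrightarrow> j \<in> J"
      using side by metis
    then show "i = j"
      using assms ij by (cases "i \<in> J") (auto dest: inj_onD)
  qed
  show "\<forall>i\<in>I. ?h i \<in> S i"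
    using assms by auto
qed

lemma Hall_condition_Diff_critical:
  assumes fin: "finite I" "\<forall>i\<in>I. finite (S i)"
    and Hall: "\<forall>K\<subseteq>I. card K \<le> card (\<Union>(S ` K))"
    and J: "J \<subseteq> I" "card (\<Union>(S ` J)) = card J"
    and K: "K \<subseteq> I - J"
  shows "card K \<le> card (\<Union>i\<in>K. S i - \<Union>(S ` J))"
proof -
  let ?U = "\<Union>(S ` J)" and ?V = "\<Union>(S ` (K \<union> J))"
  have KJ: "K \<union> J \<subseteq> I" "K \<inter> J = {}"
    using J K by auto
  then have finKJ: "finite K" "finite J" "finite ?V"
    using fin finite_subset[OF KJ(1) fin(1)] by (auto intro: finite_subset)
  have "card K + card J = card (K \<union> J)"
    using KJ(2) finKJ by (simp add: card_Un_disjoint)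
  also have "\<dots> \<le> card ?V"
    using Hall KJ(1) by blast
  also have "\<dots> = card (?V - ?U) + card ?U"
    using finKJ(3) by (simp add: card_Diff_subset card_mono)
  also have "?V - ?U = (\<Union>i\<in>K. S i - ?U)"
    by blast
  finally show ?thesis
    using J(2) by simp
qed

lemma Hall_condition_Diff_strict:
  assumes fin: "finite I" "\<forall>i\<in>I. finite (S i)"
    and strict: "\<And>K. K \<subseteq> I \<Longrightarrow> K \<noteq> {} \<Longrightarrow> K \<noteq> I \<Longrightarrow> card K < card (\<Union>(S ` K))"
    and i: "i \<in> I" and K: "K \<subseteq> I - {i}"
  shows "card K \<le> card (\<Union>k\<in>K. S k - {x})"
proof (cases "K = {}")
  case False
  have "finite (\<Union>(S ` K))"
    using K fin by (meson Diff_subset finite_UN_I finite_subset subset_iff)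
  moreover have "card K < card (\<Union>(S ` K))"
    using strict[of K] K i False by blast
  moreover have "(\<Union>k\<in>K. S k - {x}) = \<Union>(S ` K) - {x}"
    by blast
  ultimately show ?thesis
    using card_Diff_singleton_if[of "\<Union>(S ` K)" x] by auto
qed simp

theorem Hall_marriage:
  assumes "finite I" "\<forall>i\<in>I. finite (S i)"
    and "\<forall>J\<subseteq>I. card J \<le> card (\<Union>(S ` J))"
  shows "\<exists>f. inj_on f I \<and> (\<forall>i\<in>I. f i \<in> S i)"
  using assms
proof (induction "card I" arbitrary: I S rule: less_induct)
  case less
  note fin = less.prems(1,2) and Hall = less.prems(3)
  have IH: "\<exists>f. inj_on f J \<and> (\<forall>i\<in>J. f i \<in> S' i)"
    if J: "J \<subset> I" and S': "\<forall>i\<in>J. S' i \<subseteq> S i" "\<forall>K\<subseteq>J. card K \<le> card (\<Union>(S' ` K))"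
    for J S'
  proof (rule less.hyps)
    show "card J < card I" "finite J"
      using J fin(1) by (auto intro: psubset_card_mono finite_subset)
    show "\<forall>i\<in>J. finite (S' i)"
      using J S'(1) fin(2) by (meson finite_subset psubsetD)
  qed (use S'(2) in simp)
  (* Halmos-Vaughan: split off a critical subfamily if there is one, otherwise commit to
     any representative of one set. *)
  show ?case
  proof (cases "\<exists>J. J \<subseteq> I \<and> J \<noteq> {} \<and> J \<noteq> I \<and> card (\<Union>(S ` J)) = card J")
    case True
    then obtain J where J: "J \<subseteq> I" "J \<noteq> {}" "J \<noteq> I" "card (\<Union>(S ` J)) = card J"
      by blast
    let ?U = "\<Union>(S ` J)"
    obtain f where "inj_on f J" "\<forall>i\<in>J. f i \<in> S i"
      using IH[of J S] J(1,3) Hall by blast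
    moreover obtain g where "inj_on g (I - J)" "\<forall>i\<in>I - J. g i \<in> S i - ?U"
      using IH[of "I - J" "\<lambda>i. S i - ?U"] J(1,2) Hall_condition_Diff_critical[OF fin Hall J(1,4)]
      by blast
    ultimately show ?thesis
      by (intro distinct_representatives_glue[of f J S ?U g]) auto
  next
    case False
    then have strict: "card K < card (\<Union>(S ` K))" if "K \<subseteq> I" "K \<noteq> {}" "K \<noteq> I" for K
      using Hall that by (metis le_neq_implies_less)
    show ?thesis
    proof (cases "I = {}")
      case False
      then obtain i where i: "i \<in> I" by blast
      then have "S i \<noteq> {}"
        using Hall[rule_format, of "{i}"] by auto
      then obtain x where x: "x \<in> S i" by blast
      obtain g where "inj_on g (I - {i})" "\<forall>k\<in>I - {i}. g k \<in> S k - {x}"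
        using IH[of "I - {i}" "\<lambda>k. S k - {x}"] i Hall_condition_Diff_strict[OF fin strict i]
        by blast
      then show ?thesis
        using x by (intro distinct_representatives_glue[of "\<lambda>_. x" "{i}" S "{x}" g]) auto
    qed simp
  qed
qed

lemma card_non_unique_le:
  assumes fin: "finite X"
  shows "card (X - {x\<in>X. \<forall>y\<in>X. f y = f x \<longrightarrow> y = x}) \<le> 2 * (card X - card (f ` X))"
proof -
  define U where "U = {x\<in>X. \<forall>y\<in>X. f y = f x \<longrightarrow> y = x}"
  define D where "D = X - U"
  define fibre where "fibre u = {x\<in>D. f x = u}" for u
  have finD: "finite D" and finU: "finite U"
    using fin unfolding D_def U_def by simp_all
  have "D = (\<Union>u\<in>f ` D. fibre u)"
    unfolding fibre_def by blast
  also have "card \<dots> = (\<Sum>u\<in>f ` D. card (fibre u))"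
    using finD by (intro card_UN_disjoint) (auto simp: fibre_def)
  finally have cD: "card D = (\<Sum>u\<in>f ` D. card (fibre u))" .
  have "2 \<le> card (fibre u)" if u: "u \<in> f ` D" for u
  proof -
    obtain x where x: "x \<in> D" "f x = u"
      using u by blast
    then obtain y where y: "y \<in> X" "f y = f x" "y \<noteq> x"
      unfolding D_def U_def by blast
    then have "y \<in> D"
      using x unfolding D_def U_def by auto
    then have "{x, y} \<subseteq> fibre u"
      using x y unfolding fibre_def by blast
    moreover have "finite (fibre u)"
      using finD unfolding fibre_def by simp
    ultimately show ?thesis
      using y(3) card_mono[of "fibre u" "{x, y}"] by simp
  qed
  then have "2 * card (f ` D) \<le> card D"
    using cD sum_bounded_below[of "f ` D" 2 "\<lambda>u. card (fibre u)"] by simp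
  moreover have "f ` X = f ` U \<union> f ` D"
    unfolding D_def U_def by blast
  then have "card (f ` X) \<le> card U + card (f ` D)"
    using card_Un_le[of "f ` U" "f ` D"] card_image_le[OF finU, of f] by simp
  moreover have "card X = card U + card D"
    using card_Un_disjoint[OF finU finD] unfolding D_def U_def by (simp add: Un_absorb1)
  ultimately show ?thesis
    unfolding D_def U_def by linarith
qed

lemma card_mult_le_card_relation:
  assumes "finite N" "\<forall>i\<in>R. m \<le> card (N `` {i})"
  shows "card R * m \<le> card N"
proof (cases "finite R")
  case True
  have "card R * m \<le> (\<Sum>i\<in>R. card (N `` {i}))"
    using sum_bounded_below[of R m "\<lambda>i. card (N `` {i})"] assms(2) by (simp add: mult.commute)
  also have "\<dots> = card (SIGMA i:R. N `` {i})"
    using True assms(1) by (simp add: card_SigmaI finite_Image)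
  also have "\<dots> \<le> card N"
    using assms(1) by (intro card_mono) auto
  finally show ?thesis .
qed simp

lemma card_poor_rows:
  assumes U: "U \<subseteq> {..<n} \<times> {..<n}"
  shows "card {i\<in>{..<n}. card (U `` {i}) < d} * (n + 1 - d) \<le> card ({..<n} \<times> {..<n} - U)"
proof (rule card_mult_le_card_relation)
  show "\<forall>i\<in>{i\<in>{..<n}. card (U `` {i}) < d}. n + 1 - d \<le> card (({..<n} \<times> {..<n} - U) `` {i})"
  proof
    fix i assume i: "i \<in> {i\<in>{..<n}. card (U `` {i}) < d}"
    have "({..<n} \<times> {..<n} - U) `` {i} = {..<n} - U `` {i}"
      using i by auto
    moreover have "U `` {i} \<subseteq> {..<n}"
      using U by auto
    moreover have "card (U `` {i}) \<le> n"
      using card_mono[OF _ \<open>U `` {i} \<subseteq> {..<n}\<close>] by simp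
    ultimately show "n + 1 - d \<le> card (({..<n} \<times> {..<n} - U) `` {i})"
      using i by (simp add: card_Diff_subset finite_subset) linarith
  qed
qed simp

lemma inj_on_extend_to_image:
  assumes "inj_on f P" "P \<subseteq> X"
  shows "\<exists>K. P \<subseteq> K \<and> K \<subseteq> X \<and> inj_on f K \<and> f ` K = f ` X"
proof -
  define X' where "X' = {x\<in>X. f x \<notin> f ` P}"
  have "\<exists>B\<subseteq>X'. inj_on f B \<and> f ` X' = f ` B"
    by (rule subset_image_inj[THEN iffD1]) simp
  then obtain B where B: "B \<subseteq> X'" "inj_on f B" "f ` X' = f ` B"
    by blast
  have fresh: "f b \<notin> f ` P" if "b \<in> B" for b
    using B(1) that unfolding X'_def by auto
  have "inj_on f (P \<union> B)"
  proof (rule inj_onI)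
    fix x y assume "x \<in> P \<union> B" "y \<in> P \<union> B" "f x = f y"
    then show "x = y"
      using assms(1) B(2) fresh by (auto dest: inj_onD) (metis imageI)+
  qed
  moreover have "f ` X = f ` P \<union> f ` X'"
    using assms(2) unfolding X'_def by blast
  then have "f ` (P \<union> B) = f ` X"
    using B(3) by (simp add: image_Un)
  moreover have "P \<union> B \<subseteq> X"
    using assms(2) B(1) unfolding X'_def by auto
  ultimately show ?thesis
    by blast
qed

lemma inj_on_converse_iff: "inj_on f (r\<inverse>) \<longleftrightarrow> inj_on (f \<circ> prod.swap) r"
proof -
  have "r\<inverse> = prod.swap ` r"
    by auto
  then show ?thesis
    by (simp add: comp_inj_on_iff)
qed

definition partial_transversal :: "nat \<Rightarrow> (nat \<Rightarrow> nat \<Rightarrow> 'a) \<Rightarrow> (nat \<times> nat) set \<Rightarrow> bool" where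
  "partial_transversal n A P \<longleftrightarrow> P \<subseteq> {..<n} \<times> {..<n} \<and>
     inj_on fst P \<and> inj_on snd P \<and> inj_on (case_prod A) P"

lemma latin_transpose: "latin n A \<Longrightarrow> latin n (\<lambda>i j. A j i)"
  unfolding latin_def by blast

lemma partial_transversal_converse:
  "partial_transversal n (\<lambda>i j. A j i) (P\<inverse>) \<longleftrightarrow> partial_transversal n A P"
proof -
  have "fst \<circ> prod.swap = snd" "snd \<circ> prod.swap = fst"
      "case_prod (\<lambda>i j. A j i) \<circ> prod.swap = case_prod A"
    by auto
  moreover have "P\<inverse> \<subseteq> {..<n} \<times> {..<n} \<longleftrightarrow> P \<subseteq> {..<n} \<times> {..<n}"
    by auto
  ultimately show ?thesis
    unfolding partial_transversal_def inj_on_converse_iff by metis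
qed

lemma partial_transversal_finite: "partial_transversal n A P \<Longrightarrow> finite P"
  unfolding partial_transversal_def by (meson finite_SigmaI finite_lessThan finite_subset)

lemma partial_transversal_extend_row:
  assumes lat: "latin n A" and P: "partial_transversal n A P"
    and x: "x < n" "x \<notin> Domain P" and small: "2 * card P < n"
  shows "\<exists>y<n. partial_transversal n A (insert (x, y) P)"
proof -
  (* Row x of a Latin array repeats each symbol of P at most once, so besides the columns used
     by P at most card P further columns are excluded. *)
  let ?clash = "{y\<in>{..<n}. A x y \<in> case_prod A ` P}"
  have finP: "finite P"
    using P by (rule partial_transversal_finite)
  have "card ?clash \<le> card (case_prod A ` P)"
  proof (rule card_inj_on_le)
    show "inj_on (A x) ?clash"
      using lat x(1) unfolding latin_def inj_on_def by blast
  qed (use finP in auto)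
  then have "card (Range P \<union> ?clash) < n"
    using card_Un_le[of "Range P" ?clash] card_image_le[OF finP, of snd, unfolded snd_eq_Range]
      card_image_le[OF finP, of "case_prod A"] small by linarith
  then have "\<not> {..<n} \<subseteq> Range P \<union> ?clash"
    using card_mono[of "Range P \<union> ?clash" "{..<n}"] finite_Range[OF finP] by auto
  then obtain y where y: "y < n" "y \<notin> Range P" "A x y \<notin> case_prod A ` P"
    by auto
  have "(x, y) \<notin> P"
    using x(2) by force
  then have "partial_transversal n A (insert (x, y) P)"
    using P x y unfolding partial_transversal_def by (simp add: inj_on_insert image_iff fst_eq_Domain snd_eq_Range)
  with y(1) show ?thesis by blast
qed

lemma partial_transversal_cover_rows:
  assumes lat: "latin n A" and P: "partial_transversal n A P"
    and R: "finite R" "R \<subseteq> {..<n}" "2 * (card P + card R) \<le> n + 1"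
  shows "\<exists>Q. partial_transversal n A Q \<and> P \<subseteq> Q \<and> card Q \<le> card P + card R \<and> R \<subseteq> Domain Q"
  using R
proof (induction R rule: finite_induct)
  case empty
  then show ?case using P by auto
next
  case (insert x R)
  then obtain Q where Q: "partial_transversal n A Q" "P \<subseteq> Q"
      "card Q \<le> card P + card R" "R \<subseteq> Domain Q"
    by auto
  show ?case
  proof (cases "x \<in> Domain Q")
    case True
    then show ?thesis using Q insert by auto
  next
    case False
    obtain y where "partial_transversal n A (insert (x, y) Q)"
      using partial_transversal_extend_row[OF lat Q(1) _ False] Q(3) insert by force
    moreover have "card (insert (x, y) Q) \<le> Suc (card Q)"
      by (simp add: card_insert_le_m1)
    ultimately show ?thesis
      using Q insert by (intro exI[of _ "insert (x, y) Q"]) auto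
  qed
qed

lemma partial_transversal_covering:
  assumes lat: "latin n A" and RC: "R \<subseteq> {..<n}" "C \<subseteq> {..<n}"
    and small: "2 * (card R + card C) \<le> n + 1"
  shows "\<exists>P. partial_transversal n A P \<and> R \<subseteq> Domain P \<and> C \<subseteq> Range P"
proof -
  have fin: "finite R" "finite C"
    using RC finite_subset by blast+
  have "partial_transversal n A {}"
    unfolding partial_transversal_def by simp
  then obtain Q where Q: "partial_transversal n A Q" "card Q \<le> card R" "R \<subseteq> Domain Q"
    using partial_transversal_cover_rows[OF lat _ fin(1) RC(1), of "{}"] small by auto
  (* the columns are covered as rows of the transposed array *)
  have "partial_transversal n (\<lambda>i j. A j i) (Q\<inverse>)"
    using Q(1) by (simp add: partial_transversal_converse)
  moreover have "2 * (card (Q\<inverse>) + card C) \<le> n + 1"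
    using Q(2) small by (simp add: card_inverse)
  ultimately obtain Q' where Q': "partial_transversal n (\<lambda>i j. A j i) Q'" "Q\<inverse> \<subseteq> Q'" "C \<subseteq> Domain Q'"
    using partial_transversal_cover_rows[OF latin_transpose[OF lat] _ fin(2) RC(2)] by meson
  have "partial_transversal n A (Q'\<inverse>)"
    using Q'(1) partial_transversal_converse[of n A "Q'\<inverse>"] by simp
  moreover have "Q \<subseteq> Q'\<inverse>"
    using Q'(2) by auto
  then have "R \<subseteq> Domain (Q'\<inverse>)"
    using Q(3) by blast
  moreover have "C \<subseteq> Range (Q'\<inverse>)"
    using Q'(3) by simp
  ultimately show ?thesis by blast
qed

lemma few_poor_lines:
  fixes n d p e :: nat
  assumes "8 * d \<le> n" "p * (n + 1 - d) \<le> 4 * e" "256 * e + 27 * n \<le> 27 * (n * n)"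
  shows "2 * p \<le> n + 1"
proof (rule ccontr)
  assume "\<not> ?thesis"
  then have "(n + 2) * (n + 1 - d) \<le> (2 * p) * (n + 1 - d)"
    by (intro mult_right_mono) auto
  also have "\<dots> \<le> 8 * e"
    using assms(2) by simp
  finally have "(n + 2) * (8 * (n + 1 - d)) \<le> 64 * e"
    by simp
  moreover have "(n + 2) * (7 * n + 8) \<le> (n + 2) * (8 * (n + 1 - d))"
    using assms(1) by (intro mult_left_mono) auto
  ultimately have "4 * ((n + 2) * (7 * n + 8)) \<le> 27 * (n * n)"
    using assms(3) by linarith
  then show False
    by (simp add: algebra_simps)
qed

lemma no_large_blank_rectangle:
  fixes n d a b e :: nat
  assumes "d + 1 \<le> a" "d + a \<le> n" "n + 1 \<le> a + b" "a * b \<le> e" "8 * d \<le> n" "n < 8 * d + 8"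
    and "256 * e + 27 * n \<le> 27 * (n * n)"
  shows False
proof -
  (* a (n + 1 - a) is concave in a, so on d < a \<le> n - d it is smallest at an endpoint *)
  obtain x y where xy: "a = d + 1 + x" "n = a + d + y"
    using assms(1,2) by (metis le_iff_add add.commute)
  then have "(d + 1) * (n - d) \<le> a * (n + 1 - a)"
    by (simp add: algebra_simps)
  also have "\<dots> \<le> a * b"
    using assms(3) by (intro mult_left_mono) linarith+
  finally have "(d + 1) * (n - d) \<le> e"
    using assms(4) by linarith
  then have "64 * ((d + 1) * (n - d)) \<le> 64 * e"
    by simp
  moreover have "n + 1 \<le> 8 * (d + 1)" "7 * n \<le> 8 * (n - d)"
    using assms(5,6) by simp_all
  then have "(n + 1) * (7 * n) \<le> (8 * (d + 1)) * (8 * (n - d))"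
    by (rule mult_mono) simp_all
  moreover have "(8 * (d + 1)) * (8 * (n - d)) = 64 * ((d + 1) * (n - d))"
    by (simp only: mult_ac)
  moreover have "4 * ((n + 1) * (7 * n)) = 28 * (n * n) + 28 * n"
    by (simp add: algebra_simps)
  ultimately have "n = 0"
    using assms(7) by linarith
  with assms(1,2) show False by simp
qed

lemma Hall_violator_Image_large:
  assumes fin: "finite (K `` X)" and P: "P \<subseteq> K" "inj_on snd P"
    and rich: "\<forall>x\<in>X - Domain P. d \<le> card (K `` {x})"
    and violator: "card (K `` X) < card X"
  shows "d \<le> card (K `` X)"
proof (cases "X \<subseteq> Domain P")
  case True
  define partner where "partner x = (SOME y. (x, y) \<in> P)" for x
  have partner: "(x, partner x) \<in> P" if x: "x \<in> X" for x
  proof -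
    obtain y where "(x, y) \<in> P"
      using True x by force
    then show ?thesis
      unfolding partner_def by (rule someI)
  qed
  have "inj_on partner X"
  proof (rule inj_onI)
    fix x x' assume xx': "x \<in> X" "x' \<in> X" "partner x = partner x'"
    have "(x, partner x) = (x', partner x')"
      using xx' partner[of x] partner[of x'] by (intro inj_onD[OF P(2)]) simp_all
    then show "x = x'" by simp
  qed
  moreover have "partner ` X \<subseteq> K `` X"
    using partner P(1) by blast
  ultimately have "card X \<le> card (K `` X)"
    using fin by (rule card_inj_on_le)
  with violator show ?thesis by simp
next
  case False
  then obtain x where x: "x \<in> X - Domain P" by blast
  then have "K `` {x} \<subseteq> K `` X"
    by blast
  then have "card (K `` {x}) \<le> card (K `` X)"
    using fin by (rule card_mono[rotated])
  with rich x show ?thesis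
    by (meson le_trans)
qed

lemma Hall_condition_Image:
  assumes K: "K \<subseteq> {..<n} \<times> {..<n}" "card ({..<n} \<times> {..<n} - K) \<le> e"
    and P: "P \<subseteq> K" "inj_on fst P" "inj_on snd P"
    and rich_rows: "\<forall>i<n. i \<notin> Domain P \<longrightarrow> d \<le> card (K `` {i})"
    and rich_cols: "\<forall>j<n. j \<notin> Range P \<longrightarrow> d \<le> card (K\<inverse> `` {j})"
    and d: "8 * d \<le> n" "n < 8 * d + 8" and e: "256 * e + 27 * n \<le> 27 * (n * n)"
    and X: "X \<subseteq> {..<n}"
  shows "card X \<le> card (K `` X)"
proof (rule ccontr)
  assume "\<not> card X \<le> card (K `` X)"
  then have violator: "card (K `` X) < card X"
    by simp
  define Y where "Y = {..<n} - K `` X"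
  have KX: "K `` X \<subseteq> {..<n}" and KY: "K\<inverse> `` Y \<subseteq> {..<n} - X"
    using K(1) unfolding Y_def by blast+
  have fin: "finite X" "finite (K `` X)" "finite (K\<inverse> `` Y)"
    using finite_subset[OF X] finite_subset[OF KX] finite_subset[OF KY] by simp_all
  have cX: "card X \<le> n"
    using card_mono[OF finite_lessThan X] by simp
  have cY: "card Y = n - card (K `` X)"
    unfolding Y_def using KX by (simp add: card_Diff_subset fin(2))
  have cKY: "card (K\<inverse> `` Y) \<le> n - card X"
    using card_mono[OF _ KY] X by (simp add: card_Diff_subset fin(1))
  have "d \<le> card (K `` X)"
    using Hall_violator_Image_large[OF fin(2) P(1,3) _ violator] rich_rows X by blast
  then have a: "d + 1 \<le> card X"
    using violator by linarith
  (* the unreached columns Y violate Hall's condition in the transpose, reaching only rows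
     outside X *)
  have P': "P\<inverse> \<subseteq> K\<inverse>" "inj_on snd (P\<inverse>)"
    using P(1,2) by (auto simp: inj_on_converse_iff comp_def)
  have "\<forall>y\<in>Y - Domain (P\<inverse>). d \<le> card (K\<inverse> `` {y})"
    using rich_cols unfolding Y_def by auto
  moreover have "card (K\<inverse> `` Y) < card Y"
    using cKY cY cX violator by linarith
  ultimately have "d \<le> card (K\<inverse> `` Y)"
    by (rule Hall_violator_Image_large[OF fin(3) P'])
  then have b: "d + card X \<le> n"
    using cKY cX by linarith
  have "X \<times> Y \<subseteq> {..<n} \<times> {..<n} - K"
    using X unfolding Y_def by blast
  then have "card X * card Y \<le> e"
    using K(2) card_mono[of "{..<n} \<times> {..<n} - K" "X \<times> Y"] by (simp add: card_cartesian_product)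
  moreover have "n + 1 \<le> card X + card Y"
    using cY violator by linarith
  ultimately show False
    using no_large_blank_rectangle[OF a b _ _ d e] by blast
qed

definition unique_cells :: "nat \<Rightarrow> (nat \<Rightarrow> nat \<Rightarrow> 'a) \<Rightarrow> (nat \<times> nat) set" where
  "unique_cells n A = {c\<in>{..<n} \<times> {..<n}. \<forall>c'\<in>{..<n} \<times> {..<n}. case_prod A c' = case_prod A c \<longrightarrow> c' = c}"

lemma symbols_eq_image: "symbols n A = case_prod A ` ({..<n} \<times> {..<n})"
  unfolding symbols_def by auto

lemma few_poor_lines_unique_cells:
  fixes n d e :: nat and A :: "nat \<Rightarrow> nat \<Rightarrow> 'a"
  defines "U \<equiv> unique_cells n A"
  assumes e: "card (symbols n A) + e = n * n" "256 * e + 27 * n \<le> 27 * (n * n)"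
    and d: "8 * d \<le> n"
  shows "2 * (card {i\<in>{..<n}. card (U `` {i}) < d} + card {j\<in>{..<n}. card (U\<inverse> `` {j}) < d}) \<le> n + 1"
proof -
  let ?cells = "{..<n} \<times> {..<n}"
  have U: "U \<subseteq> ?cells"
    unfolding U_def unique_cells_def by blast
  have "card (?cells - U) \<le> 2 * e"
    using card_non_unique_le[of ?cells "case_prod A"] e(1)
    unfolding U_def unique_cells_def symbols_eq_image by (simp add: card_cartesian_product)
  moreover have "card {i\<in>{..<n}. card (U `` {i}) < d} * (n + 1 - d) \<le> card (?cells - U)"
    using card_poor_rows[OF U] .
  moreover have "U\<inverse> \<subseteq> ?cells" "?cells - U\<inverse> = (?cells - U)\<inverse>"
    using U by blast+
  then have "card {j\<in>{..<n}. card (U\<inverse> `` {j}) < d} * (n + 1 - d) \<le> card (?cells - U)"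
    using card_poor_rows[of "U\<inverse>" n d] by (simp add: card_inverse)
  ultimately have "(card {i\<in>{..<n}. card (U `` {i}) < d} + card {j\<in>{..<n}. card (U\<inverse> `` {j}) < d})
      * (n + 1 - d) \<le> 4 * e"
    unfolding add_mult_distrib by linarith
  then show ?thesis
    by (rule few_poor_lines[OF d _ e(2)])
qed

lemma partial_transversal_extend_rainbow:
  assumes P: "partial_transversal n A P" and e: "card (symbols n A) + e = n * n"
  shows "\<exists>K. P \<subseteq> K \<and> K \<subseteq> {..<n} \<times> {..<n} \<and> inj_on (case_prod A) K \<and>
    unique_cells n A \<subseteq> K \<and> card ({..<n} \<times> {..<n} - K) = e"
proof -
  let ?cells = "{..<n} \<times> {..<n}"
  have "inj_on (case_prod A) P" "P \<subseteq> ?cells"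
    using P unfolding partial_transversal_def by simp_all
  then obtain K where K: "P \<subseteq> K" "K \<subseteq> ?cells" "inj_on (case_prod A) K"
      "case_prod A ` K = case_prod A ` ?cells"
    using inj_on_extend_to_image by metis
  have "unique_cells n A \<subseteq> K"
  proof
    fix c assume "c \<in> unique_cells n A"
    then have c: "c \<in> ?cells" "\<And>c'. c' \<in> ?cells \<Longrightarrow> case_prod A c' = case_prod A c \<Longrightarrow> c' = c"
      unfolding unique_cells_def by auto
    have "case_prod A c \<in> case_prod A ` K"
      unfolding K(4) using c(1) by (rule imageI)
    then obtain k where k: "k \<in> K" "case_prod A k = case_prod A c"
      by (rule imageE) simp
    then have "k = c"
      using c(2) K(2) by blast
    with k(1) show "c \<in> K"
      by simp
  qed
  moreover have "card K = card (symbols n A)"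
    using card_image[OF K(3)] K(4) by (simp add: symbols_eq_image)
  then have "card (?cells - K) = e"
    using K(2) e by (simp add: card_Diff_subset finite_subset card_cartesian_product)
  ultimately show ?thesis
    using K(1-3) by blast
qed

lemma latin_rainbow_Hall_subarray:
  assumes lat: "latin n A"
    and e: "card (symbols n A) + e = n * n" "256 * e + 27 * n \<le> 27 * (n * n)"
  shows "\<exists>K\<subseteq>{..<n} \<times> {..<n}. inj_on (case_prod A) K \<and> (\<forall>X\<subseteq>{..<n}. card X \<le> card (K `` X))"
proof -
  define U where "U = unique_cells n A"
  define d where "d = n div 8"
  have d: "8 * d \<le> n" "n < 8 * d + 8"
    unfolding d_def by simp_all
  have "\<exists>P. partial_transversal n A P \<and> {i\<in>{..<n}. card (U `` {i}) < d} \<subseteq> Domain P \<and>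
      {j\<in>{..<n}. card (U\<inverse> `` {j}) < d} \<subseteq> Range P"
    unfolding U_def by (rule partial_transversal_covering[OF lat _ _ few_poor_lines_unique_cells[OF e d(1)]]) auto
  then obtain P where P: "partial_transversal n A P"
      "{i\<in>{..<n}. card (U `` {i}) < d} \<subseteq> Domain P" "{j\<in>{..<n}. card (U\<inverse> `` {j}) < d} \<subseteq> Range P"
    by blast
  obtain K where K: "P \<subseteq> K" "K \<subseteq> {..<n} \<times> {..<n}" "inj_on (case_prod A) K" "U \<subseteq> K"
      "card ({..<n} \<times> {..<n} - K) = e"
    using partial_transversal_extend_rainbow[OF P(1) e(1)] unfolding U_def by blast
  have finK: "finite K"
    using K(2) by (rule finite_subset) simp
  have "d \<le> card (K `` {i})" if "i < n" "i \<notin> Domain P" for i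
  proof -
    have "card (U `` {i}) \<le> card (K `` {i})"
      using K(4) finK by (intro card_mono) (auto intro: finite_Image)
    moreover have "\<not> card (U `` {i}) < d"
      using P(2) that by blast
    ultimately show ?thesis
      by linarith
  qed
  moreover have "d \<le> card (K\<inverse> `` {j})" if "j < n" "j \<notin> Range P" for j
  proof -
    have "card (U\<inverse> `` {j}) \<le> card (K\<inverse> `` {j})"
      using K(4) finK by (intro card_mono) (auto intro: finite_Image)
    moreover have "\<not> card (U\<inverse> `` {j}) < d"
      using P(3) that by blast
    ultimately show ?thesis
      by linarith
  qed
  moreover have "inj_on fst P" "inj_on snd P"
    using P(1) unfolding partial_transversal_def by simp_all
  ultimately have "\<forall>X\<subseteq>{..<n}. card X \<le> card (K `` X)"
    using Hall_condition_Image[OF K(2) _ K(1) _ _ _ _ d e(2)] K(5) by blast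
  with K(2,3) show ?thesis
    by blast
qed

lemma is_transversal_image:
  assumes "inj_on g {..<n}" "\<forall>i<n. g i < n" "inj_on (\<lambda>i. A i (g i)) {..<n}"
  shows "is_transversal n A ((\<lambda>i. (i, g i, A i (g i))) ` {..<n})"
proof -
  have "card ((\<lambda>i. (i, g i, A i (g i))) ` {..<n}) = n"
    by (subst card_image) (auto simp: inj_on_def)
  then show ?thesis
    using assms unfolding is_transversal_def entries_def inj_on_def by auto
qed

lemma rainbow_Hall_subarray_transversal:
  assumes K: "K \<subseteq> {..<n} \<times> {..<n}" "inj_on (case_prod A) K"
    and Hall: "\<forall>X\<subseteq>{..<n}. card X \<le> card (K `` X)"
  shows "\<exists>T. is_transversal n A T"
proof -
  have "\<exists>g. inj_on g {..<n} \<and> (\<forall>i\<in>{..<n}. g i \<in> K `` {i})"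
  proof (rule Hall_marriage)
    show "\<forall>i\<in>{..<n}. finite (K `` {i})"
      using finite_subset[OF K(1)] by (simp add: finite_Image)
    show "\<forall>X\<subseteq>{..<n}. card X \<le> card (\<Union>i\<in>X. K `` {i})"
      using Hall by (simp flip: Image_eq_UN)
  qed simp
  then obtain g where g: "inj_on g {..<n}" "\<And>i. i < n \<Longrightarrow> (i, g i) \<in> K"
    by auto
  then have "\<forall>i<n. g i < n"
    using K(1) by blast
  moreover have "inj_on (\<lambda>i. A i (g i)) {..<n}"
  proof (rule inj_onI)
    fix i j assume "i \<in> {..<n}" "j \<in> {..<n}" "A i (g i) = A j (g j)"
    then have "(i, g i) = (j, g j)"
      using g(2) by (intro inj_onD[OF K(2)]) simp_all
    then show "i = j" by simp
  qed
  ultimately show ?thesis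
    using is_transversal_image[OF g(1)] by blast
qed

theorem mainTheorem2:
  fixes n :: nat and A :: "nat \<Rightarrow> nat \<Rightarrow> 'a"
  assumes "latin n A"
    and "real (card (symbols n A)) \<ge> (229 * real n ^ 2 + 27 * real n) / 256"
  shows "\<exists>T. is_transversal n A T"
proof -
  define e where "e = n * n - card (symbols n A)"
  have "card (symbols n A) \<le> n * n"
    using card_image_le[of "{..<n} \<times> {..<n}" "case_prod A"]
    by (simp add: symbols_eq_image card_cartesian_product)
  then have e_sym: "card (symbols n A) + e = n * n"
    unfolding e_def by simp
  have "real (229 * (n * n) + 27 * n) \<le> real (256 * card (symbols n A))"
    using assms(2) by (simp add: power2_eq_square field_simps)
  then have "229 * (n * n) + 27 * n \<le> 256 * card (symbols n A)"
    by (simp only: of_nat_le_iff)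
  then have "256 * e + 27 * n \<le> 27 * (n * n)"
    using e_sym by linarith
  then show ?thesis
    using latin_rainbow_Hall_subarray[OF assms(1) e_sym] rainbow_Hall_subarray_transversal by blast
qed

end
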